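(* $\mathfrak{s}\leq\mathfrak{s}(\mathbb{R})$.
   Context: For infinite sets $U, A$, say $U$ splits $A$ if both $A\cap U$ and $A\setminus U$ are infinite. $\mathfrak{s}$ is the splitting number: the smallest cardinality of a family $\mathcal{F}$ of subsets of $\mathbb{N}$ such that every infinite subset of $\mathbb{N}$ is split by some member of $\mathcal{F}$. $\mathfrak{s}(\mathbb{R})$ is the smallest cardinality of a family $\mathcal{U}$ of open subsets of $\mathbb{R}$ (usual topology) such that every infinite $A\subseteq\mathbb{R}$ is split by some $U\in\mathcal{U}$. *)

theory Defs
  imports "HOL-Analysis.Analysis"
begin

definition splits :: "'a set \<Rightarrow> 'a set \<Rightarrow> bool" where
  "splits U A \<longleftrightarrow> infinite (A \<inter> U) \<and> infinite (A - U)"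

definition splitting_family_nat :: "nat set set \<Rightarrow> bool" where
  "splitting_family_nat F \<longleftrightarrow> (\<forall>A. infinite A \<longrightarrow> (\<exists>U\<in>F. splits U A))"

definition splitting_family_real :: "real set set \<Rightarrow> bool" where
  "splitting_family_real \<U> \<longleftrightarrow> (\<forall>U\<in>\<U>. open U) \<and>
     (\<forall>A::real set. infinite A \<longrightarrow> (\<exists>U\<in>\<U>. splits U A))"

end

theory Submission
  imports Defs
begin

text \<open>Pull a splitting family on \<open>\<real>\<close> back along the embedding \<open>\<nat> \<rightarrow> \<real>\<close>: since the
  embedding is injective, a preimage splits \<open>A\<close> exactly when the original set splits the
  image of \<open>A\<close>, and taking preimages cannot increase the size of the family.\<close>

lemma splits_vimage_iff:
  assumes "inj f"
  shows "splits (f -` U) A \<longleftrightarrow> splits U (f ` A)"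
proof -
  have "f ` A \<inter> U = f ` (A \<inter> f -` U)" and "f ` A - U = f ` (A - f -` U)"
    using assms by (auto dest: injD)
  then show ?thesis
    using assms by (simp add: splits_def finite_image_iff inj_on_subset)
qed

lemma splits_vimage_family:
  assumes "inj f"
    and splitting: "\<And>B. infinite B \<Longrightarrow> \<exists>U\<in>\<U>. splits U B"
    and "infinite A"
  shows "\<exists>V\<in>(\<lambda>U. f -` U) ` \<U>. splits V A"
proof -
  have "infinite (f ` A)"
    using assms(1,3) by (simp add: finite_image_iff inj_on_subset)
  then obtain U where "U \<in> \<U>" and "splits U (f ` A)"
    using splitting by blast
  then show ?thesis
    using assms(1) by (auto simp: splits_vimage_iff)
qed

theorem lemma2p7:
  fixes \<U> :: "real set set"
  assumes "splitting_family_real \<U>"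
  shows "\<exists>F. splitting_family_nat F \<and> (card_of F, card_of \<U>) \<in> ordLeq"
proof (intro exI conjI)
  let ?F = "(\<lambda>U. (of_nat :: nat \<Rightarrow> real) -` U) ` \<U>"
  have "inj (of_nat :: nat \<Rightarrow> real)"
    by (simp add: inj_on_def)
  then show "splitting_family_nat ?F"
    using assms splits_vimage_family
    unfolding splitting_family_nat_def splitting_family_real_def by blast
  show "(card_of ?F, card_of \<U>) \<in> ordLeq"
    by (rule card_of_image)
qed

end
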